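(* Consider a common-value auction for a single item among several "slow" bidders and one "fast" bidder, all risk neutral. The value of the item evolves as $v_t = e^{m_t} v_0$ for $t \ge 0$, where $v_0>0$ and $m_t \sim N(-\tfrac{\sigma^2}{2} t, \sigma^2 t)$ (a geometric Brownian motion with $\sigma>0$, so $\mathbb{E}[v_{t+\delta}\mid v_t] = v_t$ for all $t,\delta\ge 0$). The slow bidders submit sealed bids at time $0$. The fast bidder observes the slow bidders' bids and the value process, and submits its bid at time $\Delta>0$. The highest bidder wins, pays its own bid, and receives the realized value $v_\Delta$. Then in equilibrium the slow bidders bid $0$ and the fast bidder wins the item with probability $1$; indeed, any bid $b>0$ by a slow bidder yields strictly negative expected payoff.
   Context: A bidder's payoff is $v_\Delta$ minus its bid if it wins, and $0$ otherwise. *)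

theory Defs
  imports "HOL-Probability.Probability"
begin

text \<open>Slow bidders are indexed by 0..<n; a slow bid profile is a function
  bids :: nat => real (only the values below n matter).  The fast bidder's
  strategy maps the observed slow bid profile and the observed value v_Delta
  to its bid.  Convention: a tie between the fast bidder and the highest slow
  bid is resolved in favour of the fast bidder; ties among slow bidders are
  split uniformly.\<close>

definition maxbid :: "nat \<Rightarrow> (nat \<Rightarrow> real) \<Rightarrow> real" where
  "maxbid n bids = Max (bids ` {..<n})"

definition valid_bids :: "nat \<Rightarrow> (nat \<Rightarrow> real) \<Rightarrow> bool" where
  "valid_bids n bids \<longleftrightarrow> (\<forall>i<n. bids i \<ge> 0)"

definition fast_payoff :: "nat \<Rightarrow> (nat \<Rightarrow> real) \<Rightarrow> real \<Rightarrow> real \<Rightarrow> real" where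
  "fast_payoff n bids c v = (if c \<ge> maxbid n bids then v - c else 0)"

definition slow_payoff :: "nat \<Rightarrow> (nat \<Rightarrow> real) \<Rightarrow> real \<Rightarrow> real \<Rightarrow> nat \<Rightarrow> real" where
  "slow_payoff n bids c v i =
     (if c < maxbid n bids \<and> bids i = maxbid n bids
      then (v - bids i) / real (card {j. j < n \<and> bids j = maxbid n bids})
      else 0)"

definition fast_admissible :: "((nat \<Rightarrow> real) \<Rightarrow> real \<Rightarrow> real) \<Rightarrow> bool" where
  "fast_admissible s \<longleftrightarrow>
     (\<forall>bids. s bids \<in> borel_measurable borel \<and> (\<forall>v. s bids v \<ge> 0))"

definition fast_best_response :: "nat \<Rightarrow> ((nat \<Rightarrow> real) \<Rightarrow> real \<Rightarrow> real) \<Rightarrow> bool" where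
  "fast_best_response n s \<longleftrightarrow>
     (\<forall>bids v. valid_bids n bids \<longrightarrow> v > 0 \<longrightarrow>
        (\<forall>c\<ge>0. fast_payoff n bids c v \<le> fast_payoff n bids (s bids v) v))"

definition log_value_law :: "real \<Rightarrow> real \<Rightarrow> real measure" where
  "log_value_law \<sigma> \<Delta> = density lborel (normal_density (- (\<sigma>\<^sup>2 * \<Delta> / 2)) (\<sigma> * sqrt \<Delta>))"

definition exp_slow_payoff ::
  "nat \<Rightarrow> real \<Rightarrow> real \<Rightarrow> real \<Rightarrow> ((nat \<Rightarrow> real) \<Rightarrow> real \<Rightarrow> real) \<Rightarrow> (nat \<Rightarrow> real) \<Rightarrow> nat \<Rightarrow> real" where
  "exp_slow_payoff n v0 \<sigma> \<Delta> s bids i =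
     (\<integral>m. slow_payoff n bids (s bids (exp m * v0)) (exp m * v0) i \<partial>log_value_law \<sigma> \<Delta>)"

definition fast_win_prob ::
  "nat \<Rightarrow> real \<Rightarrow> real \<Rightarrow> real \<Rightarrow> ((nat \<Rightarrow> real) \<Rightarrow> real \<Rightarrow> real) \<Rightarrow> (nat \<Rightarrow> real) \<Rightarrow> real" where
  "fast_win_prob n v0 \<sigma> \<Delta> s bids =
     measure (log_value_law \<sigma> \<Delta>) {m. s bids (exp m * v0) \<ge> maxbid n bids}"

definition equilibrium ::
  "nat \<Rightarrow> real \<Rightarrow> real \<Rightarrow> real \<Rightarrow> (nat \<Rightarrow> real) \<Rightarrow> ((nat \<Rightarrow> real) \<Rightarrow> real \<Rightarrow> real) \<Rightarrow> bool" where
  "equilibrium n v0 \<sigma> \<Delta> bids s \<longleftrightarrow>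
     valid_bids n bids \<and> fast_admissible s \<and> fast_best_response n s \<and>
     (\<forall>i<n. \<forall>b\<ge>0. exp_slow_payoff n v0 \<sigma> \<Delta> s (bids(i := b)) i
                    \<le> exp_slow_payoff n v0 \<sigma> \<Delta> s bids i)"

end

theory Submission
  imports Defs
begin

(* Adverse selection: the fast bidder sees v_Delta and the slow bids before bidding, so it
   best-responds by outbidding the highest slow bid b exactly when v_Delta > b.  A slow bidder
   therefore wins only when v_Delta <= b, and then pays b for an item worth v_Delta, so its
   payoff is never positive.  Because m_Delta is normal, the event v_Delta < b has positive
   probability for every b > 0, so a positive bid has strictly negative expected payoff,
   whereas bidding 0 yields exactly 0. *)

lemma prob_space_log_value_law: "\<sigma> > 0 \<Longrightarrow> \<Delta> > 0 \<Longrightarrow> prob_space (log_value_law \<sigma> \<Delta>)"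
  unfolding log_value_law_def by (rule prob_space_normal_density) simp

lemma sets_log_value_law [simp, measurable_cong]: "sets (log_value_law \<sigma> \<Delta>) = sets borel"
  unfolding log_value_law_def by simp

lemma space_log_value_law [simp]: "space (log_value_law \<sigma> \<Delta>) = UNIV"
  unfolding log_value_law_def by simp

lemma emeasure_density_neq_0:
  assumes f: "f \<in> borel_measurable M" and A: "A \<in> sets M" "emeasure M A \<noteq> 0"
    and pos: "\<forall>x\<in>A. f x > 0"
  shows "emeasure (density M f) A \<noteq> 0"
proof
  assume "emeasure (density M f) A = 0"
  with A have "A \<in> null_sets (density M f)" by (simp add: null_setsI)
  then have "AE x in M. x \<in> A \<longrightarrow> f x = 0" using null_sets_density_iff[OF f] by blast
  then have "AE x in M. x \<notin> A" by (rule eventually_mono) (use pos in fastforce)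
  then have "A \<in> null_sets M" using AE_iff_null_sets[OF A(1)] by blast
  with A(2) show False by auto
qed

lemma emeasure_log_value_law_Ioo_neq_0:
  assumes "\<sigma> > 0" "\<Delta> > 0" "a < b"
  shows "emeasure (log_value_law \<sigma> \<Delta>) {a<..<b} \<noteq> 0"
  unfolding log_value_law_def
  using assms by (intro emeasure_density_neq_0) (auto simp: normal_density_pos)

lemma maxbid_ge: "j < n \<Longrightarrow> bids j \<le> maxbid n bids"
  unfolding maxbid_def by (intro Max_ge) auto

lemma maxbid_attained: "n \<ge> 1 \<Longrightarrow> \<exists>j<n. bids j = maxbid n bids"
proof -
  assume "n \<ge> 1"
  then have "maxbid n bids \<in> bids ` {..<n}"
    unfolding maxbid_def by (intro Max_in) (auto simp: lessThan_empty_iff)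
  then show ?thesis by auto
qed

lemma maxbid_eq_bid: "i < n \<Longrightarrow> \<forall>j<n. bids j \<le> bids i \<Longrightarrow> maxbid n bids = bids i"
  unfolding maxbid_def by (intro Max_eqI) auto

lemma maxbid_nonneg: "n \<ge> 1 \<Longrightarrow> valid_bids n bids \<Longrightarrow> 0 \<le> maxbid n bids"
  using maxbid_ge[of 0 n bids] unfolding valid_bids_def by force

lemma fast_best_response_outbids:
  assumes "n \<ge> 1" "fast_best_response n s" "valid_bids n bids" "v > maxbid n bids"
  shows "maxbid n bids \<le> s bids v"
proof (rule ccontr)
  assume lose: "\<not> ?thesis"
  have "0 < v" using assms maxbid_nonneg[of n bids] by linarith
  then have "fast_payoff n bids (maxbid n bids) v \<le> fast_payoff n bids (s bids v) v"
    using assms maxbid_nonneg[of n bids] unfolding fast_best_response_def by blast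
  then show False using lose assms(4) unfolding fast_payoff_def by auto
qed

lemma fast_best_response_loses:
  assumes "fast_best_response n s" "valid_bids n bids" "0 < v" "v < maxbid n bids"
  shows "s bids v < maxbid n bids"
proof (rule ccontr)
  assume win: "\<not> ?thesis"
  have "fast_payoff n bids 0 v \<le> fast_payoff n bids (s bids v) v"
    using assms unfolding fast_best_response_def by blast
  then show False using win assms(3,4) unfolding fast_payoff_def by auto
qed

lemma slow_payoff_eq_0_if_outbid: "bids i \<le> c \<Longrightarrow> slow_payoff n bids c v i = 0"
  unfolding slow_payoff_def by auto

lemma slow_payoff_le_0:
  assumes "n \<ge> 1" "fast_best_response n s" "valid_bids n bids"
  shows "slow_payoff n bids (s bids v) v i \<le> 0"
proof (cases "s bids v < maxbid n bids \<and> bids i = maxbid n bids")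
  case True
  then have "v \<le> bids i" using fast_best_response_outbids[OF assms, of v] by force
  then show ?thesis using True unfolding slow_payoff_def by (auto intro: divide_nonpos_nonneg)
qed (auto simp: slow_payoff_def)

lemma abs_slow_payoff_le_maxbid:
  assumes "n \<ge> 1" "fast_best_response n s" "valid_bids n bids" "0 \<le> v"
  shows "\<bar>slow_payoff n bids (s bids v) v i\<bar> \<le> maxbid n bids"
proof (cases "s bids v < maxbid n bids \<and> bids i = maxbid n bids")
  case True
  let ?K = "real (card {j. j < n \<and> bids j = maxbid n bids})"
  have "v \<le> maxbid n bids" using True fast_best_response_outbids[OF assms(1-3), of v] by force
  then have "\<bar>v - bids i\<bar> \<le> maxbid n bids" using True assms(4) by simp
  moreover have "\<bar>(v - bids i) / ?K\<bar> \<le> \<bar>v - bids i\<bar>"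
    by (cases "?K = 0") (simp_all add: abs_divide divide_le_eq mult_le_cancel_left1)
  ultimately show ?thesis using True unfolding slow_payoff_def by simp
qed (use assms maxbid_nonneg in \<open>auto simp: slow_payoff_def\<close>)

lemma slow_payoff_neg:
  assumes "fast_best_response n s" "valid_bids n bids" "i < n" "bids i = maxbid n bids"
    and "0 < v" "v < bids i"
  shows "slow_payoff n bids (s bids v) v i < 0"
proof -
  have "s bids v < maxbid n bids" using fast_best_response_loses[OF assms(1,2,5)] assms(4,6) by simp
  moreover have "card {j. j < n \<and> bids j = maxbid n bids} > 0"
    using assms(3,4) by (auto simp: card_gt_0_iff)
  ultimately show ?thesis using assms(4,6) unfolding slow_payoff_def by (simp add: divide_neg_pos)
qed

lemma exp_slow_payoff_le_0:
  assumes "n \<ge> 1" "fast_best_response n s" "valid_bids n bids"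
  shows "exp_slow_payoff n v0 \<sigma> \<Delta> s bids i \<le> 0"
proof -
  have "0 \<le> (\<integral>m. - slow_payoff n bids (s bids (exp m * v0)) (exp m * v0) i \<partial>log_value_law \<sigma> \<Delta>)"
    using slow_payoff_le_0[OF assms] by (intro integral_nonneg_AE) auto
  then show ?thesis unfolding exp_slow_payoff_def by simp
qed

lemma exp_slow_payoff_eq_0_if_bid_nonpos:
  assumes "fast_admissible s" "bids i \<le> 0"
  shows "exp_slow_payoff n v0 \<sigma> \<Delta> s bids i = 0"
proof -
  have "bids i \<le> s bids v" for v using assms unfolding fast_admissible_def by (meson order_trans)
  then show ?thesis unfolding exp_slow_payoff_def by (simp add: slow_payoff_eq_0_if_outbid)
qed

lemma integrable_slow_payoff:
  assumes "n \<ge> 1" "fast_admissible s" "fast_best_response n s" "valid_bids n bids"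
    and "v0 > 0" "\<sigma> > 0" "\<Delta> > 0"
  shows "integrable (log_value_law \<sigma> \<Delta>) (\<lambda>m. slow_payoff n bids (s bids (exp m * v0)) (exp m * v0) i)"
proof -
  interpret prob_space "log_value_law \<sigma> \<Delta>" using prob_space_log_value_law assms by blast
  have [measurable]: "s bids \<in> borel_measurable borel"
    using assms(2) unfolding fast_admissible_def by blast
  show ?thesis
    using abs_slow_payoff_le_maxbid[OF assms(1,3,4)] assms(5)
    by (intro integrable_const_bound[where B = "maxbid n bids"])
       (auto simp: slow_payoff_def measurable_cong_sets[OF sets_log_value_law refl])
qed

lemma exp_slow_payoff_neg:
  assumes "n \<ge> 1" "fast_admissible s" "fast_best_response n s" "valid_bids n bids"
    and "v0 > 0" "\<sigma> > 0" "\<Delta> > 0"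
    and "i < n" "bids i = maxbid n bids" "0 < bids i"
  shows "exp_slow_payoff n v0 \<sigma> \<Delta> s bids i < 0"
proof -
  interpret prob_space "log_value_law \<sigma> \<Delta>" using prob_space_log_value_law assms by blast
  define f where "f m = slow_payoff n bids (s bids (exp m * v0)) (exp m * v0) i" for m
  define c where "c = ln (bids i / v0)"
  have "f m < 0" if "m \<in> {c - 1<..<c}" for m
  proof -
    have "exp m < exp c" using that by simp
    also have "exp c = bids i / v0" unfolding c_def using assms(5,10) by simp
    finally have "exp m < bids i / v0" .
    then show ?thesis
      using slow_payoff_neg[OF assms(3,4,8,9)] assms(5) unfolding f_def by (simp add: less_divide_eq)
  qed
  moreover have "f m \<le> 0" for m unfolding f_def using slow_payoff_le_0[OF assms(1,3,4)] .
  moreover have "integrable (log_value_law \<sigma> \<Delta>) f"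
    unfolding f_def using integrable_slow_payoff[OF assms(1-7)] .
  ultimately have "integral\<^sup>L (log_value_law \<sigma> \<Delta>) f < integral\<^sup>L (log_value_law \<sigma> \<Delta>) (\<lambda>_. 0)"
    using emeasure_log_value_law_Ioo_neq_0[OF assms(6,7), of "c - 1" c]
    by (intro integral_less_AE[where A = "{c - 1<..<c}"]) (auto simp: less_imp_neq)
  then show ?thesis unfolding exp_slow_payoff_def f_def by simp
qed

(* The guard 0 <= maxbid only matters for invalid profiles; it keeps the strategy admissible. *)
definition match_bid :: "nat \<Rightarrow> (nat \<Rightarrow> real) \<Rightarrow> real \<Rightarrow> real" where
  "match_bid n bids v = (if 0 \<le> maxbid n bids \<and> maxbid n bids \<le> v then maxbid n bids else 0)"

lemma fast_admissible_match_bid: "fast_admissible (match_bid n)"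
  unfolding fast_admissible_def match_bid_def by (auto intro!: measurable_If)

lemma fast_best_response_match_bid: "n \<ge> 1 \<Longrightarrow> fast_best_response n (match_bid n)"
  unfolding fast_best_response_def fast_payoff_def match_bid_def
  using maxbid_nonneg by fastforce

lemma equilibrium_zero_bids: "n \<ge> 1 \<Longrightarrow> equilibrium n v0 \<sigma> \<Delta> (\<lambda>_. 0) (match_bid n)"
  unfolding equilibrium_def
proof (intro conjI allI impI fast_admissible_match_bid fast_best_response_match_bid)
  assume n: "n \<ge> 1"
  fix i and b :: real
  assume "0 \<le> b"
  then have "valid_bids n ((\<lambda>_. 0)(i := b))" unfolding valid_bids_def by simp
  then show "exp_slow_payoff n v0 \<sigma> \<Delta> (match_bid n) ((\<lambda>_. 0)(i := b)) i
      \<le> exp_slow_payoff n v0 \<sigma> \<Delta> (match_bid n) (\<lambda>_. 0) i"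
    using exp_slow_payoff_le_0[OF n fast_best_response_match_bid[OF n]]
      exp_slow_payoff_eq_0_if_bid_nonpos[OF fast_admissible_match_bid]
    by simp
qed (simp_all add: valid_bids_def)

lemma equilibrium_maxbid_eq_0:
  assumes "n \<ge> 1" "v0 > 0" "\<sigma> > 0" "\<Delta> > 0" and eq: "equilibrium n v0 \<sigma> \<Delta> bids s"
  shows "maxbid n bids = 0"
proof (rule ccontr)
  assume "maxbid n bids \<noteq> 0"
  moreover have valid: "valid_bids n bids" and adm: "fast_admissible s"
    and br: "fast_best_response n s"
    and no_deviation: "\<forall>i<n. \<forall>b\<ge>0. exp_slow_payoff n v0 \<sigma> \<Delta> s (bids(i := b)) i
                                   \<le> exp_slow_payoff n v0 \<sigma> \<Delta> s bids i"
    using eq unfolding equilibrium_def by auto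
  ultimately have pos: "maxbid n bids > 0" using maxbid_nonneg[OF assms(1)] by force
  obtain i where i: "i < n" "bids i = maxbid n bids" using maxbid_attained[OF assms(1)] by blast
  have "exp_slow_payoff n v0 \<sigma> \<Delta> s bids i < 0"
    using exp_slow_payoff_neg[OF assms(1) adm br valid assms(2-4) i] i pos by simp
  moreover have "exp_slow_payoff n v0 \<sigma> \<Delta> s (bids(i := 0)) i = 0"
    using exp_slow_payoff_eq_0_if_bid_nonpos[OF adm] by simp
  ultimately show False using no_deviation i(1) by force
qed

lemma fast_win_prob_eq_1:
  assumes "\<sigma> > 0" "\<Delta> > 0" "fast_admissible s" "maxbid n bids \<le> 0"
  shows "fast_win_prob n v0 \<sigma> \<Delta> s bids = 1"
proof -
  interpret prob_space "log_value_law \<sigma> \<Delta>" using prob_space_log_value_law assms by blast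
  have "{m. maxbid n bids \<le> s bids (exp m * v0)} = space (log_value_law \<sigma> \<Delta>)"
    using assms(3,4) unfolding fast_admissible_def by (auto intro: order_trans)
  then show ?thesis unfolding fast_win_prob_def using prob_space by simp
qed

theorem mainTheorem4:
  fixes n :: nat and v0 \<sigma> \<Delta> :: real
  assumes "n \<ge> 1" and "v0 > 0" and "\<sigma> > 0" and "\<Delta> > 0"
  shows "(\<exists>s. equilibrium n v0 \<sigma> \<Delta> (\<lambda>_. 0) s)
       \<and> (\<forall>bids s. equilibrium n v0 \<sigma> \<Delta> bids s \<longrightarrow>
            (\<forall>i<n. bids i = 0) \<and> fast_win_prob n v0 \<sigma> \<Delta> s bids = 1)
       \<and> (\<forall>bids s i. fast_admissible s \<and> fast_best_response n s \<and> valid_bids n bids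
            \<and> i < n \<and> bids i > 0 \<and> (\<forall>j<n. bids j \<le> bids i)
            \<longrightarrow> exp_slow_payoff n v0 \<sigma> \<Delta> s bids i < 0)"
proof (intro conjI)
  show "\<exists>s. equilibrium n v0 \<sigma> \<Delta> (\<lambda>_. 0) s"
    using equilibrium_zero_bids[OF assms(1)] by blast
  have "(\<forall>i<n. bids i = 0) \<and> fast_win_prob n v0 \<sigma> \<Delta> s bids = 1"
    if eq: "equilibrium n v0 \<sigma> \<Delta> bids s" for bids s
  proof -
    have "maxbid n bids = 0" using equilibrium_maxbid_eq_0 assms eq by blast
    moreover have "valid_bids n bids" "fast_admissible s" using eq unfolding equilibrium_def by auto
    ultimately show ?thesis
      using maxbid_ge[of _ n bids] fast_win_prob_eq_1[OF assms(3,4)]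
      unfolding valid_bids_def by force
  qed
  then show "\<forall>bids s. equilibrium n v0 \<sigma> \<Delta> bids s \<longrightarrow>
      (\<forall>i<n. bids i = 0) \<and> fast_win_prob n v0 \<sigma> \<Delta> s bids = 1" by blast
  show "\<forall>bids s i. fast_admissible s \<and> fast_best_response n s \<and> valid_bids n bids
      \<and> i < n \<and> bids i > 0 \<and> (\<forall>j<n. bids j \<le> bids i)
      \<longrightarrow> exp_slow_payoff n v0 \<sigma> \<Delta> s bids i < 0"
    using exp_slow_payoff_neg[OF assms(1) _ _ _ assms(2-4)] maxbid_eq_bid by metis
qed

end
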